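(* For every $n\in\mathbb{N}$, \[ \mathcal{M}^{(4)}(n)=\min_{1\le s\le t\le n}\mathcal{M}^{(4)}(n,s,t)=\Bigl\lfloor\frac{n^2-28n+245}{216}\Bigr\rfloor-\begin{cases}1,& n \bmod 108\in I,\\ 0,&\text{otherwise},\end{cases} \] where $I=\{0,1,27,28,43,47,48,53,58,63,67,68,69,73,78,83,88,89,93\}$.
   Context: For real $a>0$ and integers $1\le s\le t\le n$, $\mathcal{M}^{(a)}(n,s,t)$ is the number of ordered triples $T=(x,y,x+\lfloor ay\rfloor)\in\{1,\dots,n\}^3$ such that $T\in(\{1,\dots,s\}\cup\{t+1,\dots,n\})^3$ or $T\in\{s+1,\dots,t\}^3$ (monochromatic generalized Schur triples under the coloring $R^sB^{t-s}R^{n-t}$). For $a=4$ the triples are $(x,y,x+4y)$. *)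

theory Defs
  imports Complex_Main
begin

text \<open>Number of monochromatic generalized Schur triples (x, y, x + floor(a y)) in {1..n}^3
  under the colouring R^s B^(t-s) R^(n-t): red = {1..s} \<union> {t+1..n}, blue = {s+1..t}.\<close>
definition schurM :: "real \<Rightarrow> nat \<Rightarrow> nat \<Rightarrow> nat \<Rightarrow> nat" where
  "schurM a n s t = card ({(x, y, z).
      x \<in> {1..n} \<and> y \<in> {1..n} \<and> z \<in> {1..n} \<and>
      int z = int x + \<lfloor>a * real y\<rfloor> \<and>
      ({x, y, z} \<subseteq> {1..s} \<union> {t+1..n} \<or> {x, y, z} \<subseteq> {s+1..t})} :: (nat \<times> nat \<times> nat) set)"

definition schurMmin :: "real \<Rightarrow> nat \<Rightarrow> nat" where
  "schurMmin a n = Min {schurM a n s t | s t. 1 \<le> s \<and> s \<le> t \<and> t \<le> n}"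

end

theory Submission
  imports Defs
begin

text \<open>
  Let P(k) (pair_count), the sum of k - 4y over
  1 \<le> y \<le> k/4, be the number of pairs x, y \<ge> 1 with x + 4y \<le> k. The colouring R^s B^(t-s) R^(n-t)
  contains four disjoint families of monochromatic triples: red triples inside {1..s}, red triples
  with y \<le> s and x, z > t, blue triples, and red triples inside {t+1..n}. They have P(s),
  P(n-t) - P(n-t-4s), P(t-5s) and P(n-5t) elements, and there are no others when 5s \<le> t and
  n \<le> 4t.

  The lower bound is thereby reduced to integer arithmetic. Its core is
  F(n) \<le> P(s) + P(u) + P(n-5s-u) for all integers s, u, where F (schur4_bound) is the claimed
  formula: as P(k+4) = P(k) + k and F(n+108) = F(n) + n + 40, shifting (n, s, u) by (108, 20, 4)
  preserves the inequality, and for n < 108 a quadratic-form estimate leaves finitely many (s, u)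
  to check. The remaining colourings are handled by this core, the monotonicity of F and a
  concavity argument. Conversely, s near (5n-16)/27 and t = n - 4 attain F(n) for n \<ge> 9, again
  by a check over one period.
\<close>

lemma int_periodic_induct [consumes 2, case_names base step]:
  fixes n p :: int
  assumes "0 < p" and "0 \<le> n"
    and base: "\<And>n. 0 \<le> n \<Longrightarrow> n < p \<Longrightarrow> P n"
    and step: "\<And>n. 0 \<le> n \<Longrightarrow> P n \<Longrightarrow> P (n + p)"
  shows "P n"
proof -
  have "P (n mod p + p * int k)" for k
  proof (induction k)
    case 0
    show ?case using base \<open>0 < p\<close> by simp
  next
    case (Suc k)
    have "0 \<le> n mod p + p * int k" using \<open>0 < p\<close> by simp
    from step[OF this Suc] show ?case by (simp add: algebra_simps)
  qed
  moreover have "n = n mod p + p * int (nat (n div p))"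
    using assms(1,2) by (simp add: pos_imp_zdiv_nonneg_iff)
  ultimately show ?thesis by metis
qed

section \<open>Counting the pairs with x + 4y \<le> k\<close>

definition pair_count :: "int \<Rightarrow> int" where
  "pair_count k = (k div 4) * k - 2 * (k div 4) * (k div 4 + 1)"

definition pairs_le :: "int \<Rightarrow> (nat \<times> nat) set" where
  "pairs_le k = {(x, y). 1 \<le> x \<and> 1 \<le> y \<and> int x + 4 * int y \<le> k}"

lemma pair_count_diff: "pair_count k - pair_count (k - 4 * j) = j * (k - 2 * j - 2)"
proof -
  define q where "q = k div 4"
  have "(k - 4 * j) div 4 = q - j" unfolding q_def by simp
  then have "pair_count (k - 4 * j) = (q - j) * (k - 4 * j) - 2 * (q - j) * (q - j + 1)"
    unfolding pair_count_def by simp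
  moreover have "pair_count k = q * k - 2 * q * (q + 1)" unfolding pair_count_def q_def by simp
  ultimately show ?thesis by (simp add: algebra_simps)
qed

lemma pair_count_add4: "pair_count (k + 4) = pair_count k + k"
  using pair_count_diff[of "k + 4" 1] by simp

lemma pair_count_period:
  "pair_count (s + 20) + pair_count (u + 4) + pair_count (w + 4)
     = pair_count s + pair_count u + pair_count w + (5 * s + u + w) + 40"
  using pair_count_diff[of "s + 20" 5] pair_count_add4[of u] pair_count_add4[of w] by simp

lemma eight_pair_count: "8 * pair_count k = k\<^sup>2 - 4 * k + (k mod 4) * (4 - k mod 4)"
proof -
  define q r where "q = k div 4" and "r = k mod 4"
  have k: "k = 4 * q + r" unfolding q_def r_def by simp
  have "8 * (q * (4 * q + r) - 2 * q * (q + 1)) = (4 * q + r)\<^sup>2 - 4 * (4 * q + r) + r * (4 - r)"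
    by (simp add: algebra_simps power2_eq_square)
  then show ?thesis unfolding pair_count_def q_def[symmetric] r_def[symmetric] using k by simp
qed

lemma pair_count_lower: "k\<^sup>2 - 4 * k \<le> 8 * pair_count k"
proof -
  have "0 \<le> (k mod 4) * (4 - k mod 4)" by (simp add: pos_mod_bound less_imp_le)
  then show ?thesis using eight_pair_count[of k] by linarith
qed

lemma pair_count_upper: "8 * pair_count k \<le> k\<^sup>2 - 4 * k + 4"
proof -
  have "k mod 4 \<in> {0, 1, 2, 3}" by auto
  then have "(k mod 4) * (4 - k mod 4) \<le> 4" by auto
  then show ?thesis using eight_pair_count[of k] by linarith
qed

lemma pair_count_eq_0: "0 \<le> k \<Longrightarrow> k \<le> 4 \<Longrightarrow> pair_count k = 0"
proof -
  assume "0 \<le> k" "k \<le> 4"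
  then have "k \<in> {0, 1, 2, 3, 4}" by auto
  then show ?thesis unfolding pair_count_def by auto
qed

lemma pair_count_nonneg: "0 \<le> k \<Longrightarrow> 0 \<le> pair_count k"
proof (cases "k \<le> 4")
  case False
  then have "0 \<le> k\<^sup>2 - 4 * k" by (simp add: power2_eq_square)
  then show ?thesis using pair_count_lower[of k] by linarith
qed (simp add: pair_count_eq_0)

lemma pair_count_diff_le: "b \<le> a \<Longrightarrow> 4 * (pair_count a - pair_count b) \<le> (a - b) * a"
proof (cases "a = b")
  case False
  assume "b \<le> a"
  then have "1 \<le> a - b" using False by simp
  then have "1 * 5 \<le> (a - b) * (a - b + 4)" by (intro mult_mono) auto
  then have "(a\<^sup>2 - 4 * a + 4) - (b\<^sup>2 - 4 * b) \<le> 2 * ((a - b) * a)"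
    by (simp add: algebra_simps power2_eq_square)
  moreover have "8 * (pair_count a - pair_count b) = 8 * pair_count a - 8 * pair_count b" by simp
  ultimately show ?thesis using pair_count_lower[of b] pair_count_upper[of a] by linarith
qed simp

lemma pairs_le_empty: "k \<le> 4 \<Longrightarrow> pairs_le k = {}"
  unfolding pairs_le_def by auto

lemma finite_pairs_le: "finite (pairs_le k)"
proof -
  have "pairs_le k \<subseteq> {0..nat k} \<times> {0..nat k}" unfolding pairs_le_def by auto
  then show ?thesis by (rule finite_subset) simp
qed

lemma pairs_le_add4:
  assumes "0 \<le> k"
  shows "pairs_le (k + 4) = (\<lambda>x. (x, 1)) ` {1..nat k} \<union> (\<lambda>(x, y). (x, y + 1)) ` pairs_le k"
proof (intro equalityI subsetI)
  fix p assume p: "p \<in> pairs_le (k + 4)"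
  obtain x y where xy: "p = (x, y)" by (cases p)
  show "p \<in> (\<lambda>x. (x, 1)) ` {1..nat k} \<union> (\<lambda>(x, y). (x, y + 1)) ` pairs_le k"
  proof (cases "y = 1")
    case False
    then have "(x, y - 1) \<in> pairs_le k" using p unfolding xy pairs_le_def by auto
    moreover have "p = (x, y - 1 + 1)" using False p unfolding xy pairs_le_def by auto
    ultimately show ?thesis by force
  qed (use p assms in \<open>auto simp: xy pairs_le_def\<close>)
qed (use assms in \<open>auto simp: pairs_le_def\<close>)

lemma card_pairs_le: "int (card (pairs_le k)) = pair_count (max 0 k)"
proof (cases "k < 0")
  case True
  then show ?thesis by (simp add: pairs_le_empty pair_count_def)
next
  case False
  then have "0 \<le> k" by simp
  then show ?thesis
  proof (induction k rule: int_periodic_induct[where p = 4, OF zero_less_numeral,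
        consumes 1, case_names base step])
    case (base k)
    then show ?case by (simp add: pairs_le_empty pair_count_eq_0)
  next
    case (step k)
    have disj: "(\<lambda>x. (x, 1)) ` {1..nat k} \<inter> (\<lambda>(x, y). (x, y + 1)) ` pairs_le k = {}"
      by (auto simp: pairs_le_def)
    have "card ((\<lambda>(x, y). (x, Suc y)) ` pairs_le k) = card (pairs_le k)"
      by (rule card_image) (auto simp: inj_on_def)
    then have "card (pairs_le (k + 4)) = nat k + card (pairs_le k)"
      unfolding pairs_le_add4[OF step.hyps(1)] using disj finite_pairs_le
      by (simp add: card_Un_disjoint card_image inj_on_def)
    then show ?case using step pair_count_add4[of k] by simp
  qed
qed

lemma card_pairs_le_snd_le:
  "card {p \<in> pairs_le k. snd p \<le> s} + card (pairs_le (k - 4 * int s)) = card (pairs_le k)"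
proof -
  let ?low = "{p \<in> pairs_le k. snd p \<le> s}"
    and ?high = "(\<lambda>(x, y). (x, y + s)) ` pairs_le (k - 4 * int s)"
  have split: "pairs_le k = ?low \<union> ?high"
  proof (intro equalityI subsetI)
    fix p assume p: "p \<in> pairs_le k"
    obtain x y where xy: "p = (x, y)" by (cases p)
    show "p \<in> ?low \<union> ?high"
    proof (cases "y \<le> s")
      case False
      then have "(x, y - s) \<in> pairs_le (k - 4 * int s)" using p unfolding xy pairs_le_def by auto
      moreover have "p = (x, y - s + s)" using False unfolding xy by auto
      ultimately show ?thesis by force
    qed (use p xy in auto)
  qed (auto simp: pairs_le_def)
  have "?low \<inter> ?high = {}" by (auto simp: pairs_le_def)
  then have "card (?low \<union> ?high) = card ?low + card ?high"
    by (intro card_Un_disjoint) (simp_all add: finite_pairs_le)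
  then have "card (pairs_le k) = card ?low + card ?high"
    by (simp only: split[symmetric])
  moreover have "card ?high = card (pairs_le (k - 4 * int s))"
    by (rule card_image) (auto simp: inj_on_def)
  ultimately show ?thesis by simp
qed

section \<open>Monochromatic triples (x, y, x + 4y)\<close>

definition mono_triples4 :: "nat \<Rightarrow> nat \<Rightarrow> nat \<Rightarrow> (nat \<times> nat \<times> nat) set" where
  "mono_triples4 n s t = {(x, y, z). x \<in> {1..n} \<and> y \<in> {1..n} \<and> z \<in> {1..n} \<and> z = x + 4 * y \<and>
      ({x, y, z} \<subseteq> {1..s} \<union> {t+1..n} \<or> {x, y, z} \<subseteq> {s+1..t})}"

lemma schurM_4_eq_card: "schurM 4 n s t = card (mono_triples4 n s t)"
proof -
  have "\<lfloor>(4::real) * real y\<rfloor> = int (4 * y)" for y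
    by (metis floor_of_int of_int_of_nat_eq of_nat_mult of_nat_numeral)
  then have "(int z = int x + \<lfloor>(4::real) * real y\<rfloor>) = (z = x + 4 * y)" for x y z :: nat
    by linarith
  then show ?thesis unfolding schurM_def mono_triples4_def by simp
qed

lemma finite_mono_triples4: "finite (mono_triples4 n s t)"
proof -
  have "mono_triples4 n s t \<subseteq> {1..n} \<times> {1..n} \<times> {1..n}" unfolding mono_triples4_def by auto
  then show ?thesis by (rule finite_subset) simp
qed

definition shift_triple :: "nat \<Rightarrow> nat \<Rightarrow> nat \<times> nat \<Rightarrow> nat \<times> nat \<times> nat" where
  "shift_triple c d p = (fst p + c, snd p + d, fst p + c + 4 * (snd p + d))"

lemma card_shift_triple_image: "card (shift_triple c d ` A) = card A"
  by (rule card_image) (auto simp: inj_on_def shift_triple_def prod_eq_iff)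

definition block_triples :: "nat \<Rightarrow> nat \<Rightarrow> nat \<Rightarrow> (nat \<times> nat \<times> nat) set" where
  "block_triples n s t =
     shift_triple 0 0 ` pairs_le (int s) \<union>
     shift_triple t 0 ` {p \<in> pairs_le (int n - int t). snd p \<le> s} \<union>
     shift_triple s s ` pairs_le (int t - 5 * int s) \<union>
     shift_triple t t ` pairs_le (int n - 5 * int t)"

definition block_count :: "int \<Rightarrow> int \<Rightarrow> int \<Rightarrow> int" where
  "block_count n s t = pair_count s + pair_count (n - t) - pair_count (max 0 (n - t - 4 * s))
     + pair_count (max 0 (t - 5 * s)) + pair_count (max 0 (n - 5 * t))"

lemma block_triples_subset: "s \<le> t \<Longrightarrow> t \<le> n \<Longrightarrow> block_triples n s t \<subseteq> mono_triples4 n s t"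
  unfolding block_triples_def mono_triples4_def shift_triple_def pairs_le_def by auto

lemma card_block_triples:
  assumes "s \<le> t" "t \<le> n"
  shows "int (card (block_triples n s t)) = block_count (int n) (int s) (int t)"
proof -
  define A1 where "A1 = shift_triple 0 0 ` pairs_le (int s)"
  define A2 where "A2 = shift_triple t 0 ` {p \<in> pairs_le (int n - int t). snd p \<le> s}"
  define A3 where "A3 = shift_triple s s ` pairs_le (int t - 5 * int s)"
  define A4 where "A4 = shift_triple t t ` pairs_le (int n - 5 * int t)"
  have fin: "finite A1" "finite A2" "finite A3" "finite A4"
    unfolding A1_def A2_def A3_def A4_def using finite_pairs_le by auto
  have "A1 \<subseteq> {p. fst p \<le> s \<and> fst (snd p) \<le> s}" "A2 \<subseteq> {p. t < fst p \<and> fst (snd p) \<le> s}"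
    "A3 \<subseteq> {p. s < fst (snd p) \<and> fst (snd p) \<le> t}" "A4 \<subseteq> {p. t < fst (snd p)}"
    unfolding A1_def A2_def A3_def A4_def pairs_le_def shift_triple_def by auto
  then have "A1 \<inter> A2 = {}" "(A1 \<union> A2) \<inter> A3 = {}" "(A1 \<union> A2 \<union> A3) \<inter> A4 = {}"
    using assms by fastforce+
  then have "card (block_triples n s t) = card A1 + card A2 + card A3 + card A4"
    unfolding block_triples_def
      A1_def[symmetric] A2_def[symmetric] A3_def[symmetric] A4_def[symmetric]
    using fin by (simp add: card_Un_disjoint)
  moreover have "int (card A2)
      = pair_count (int n - int t) - pair_count (max 0 (int n - int t - 4 * int s))"
    using card_pairs_le_snd_le[of "int n - int t" s] card_pairs_le[of "int n - int t"]
      card_pairs_le[of "int n - int t - 4 * int s"] assms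
    unfolding A2_def card_shift_triple_image by simp
  ultimately show ?thesis
    unfolding block_count_def A1_def A3_def A4_def card_shift_triple_image
    using card_pairs_le[of "int s"] card_pairs_le[of "int t - 5 * int s"]
      card_pairs_le[of "int n - 5 * int t"]
    by simp
qed

lemma mono_triples4_subset_blocks:
  assumes "s \<le> t" "5 * s \<le> t" "n \<le> 4 * t"
  shows "mono_triples4 n s t \<subseteq> block_triples n s t"
proof
  fix p assume p: "p \<in> mono_triples4 n s t"
  obtain x y z where xyz: "p = (x, y, z)" by (cases p)
  have z: "z = x + 4 * y" and x1: "1 \<le> x" and y1: "1 \<le> y" and zn: "z \<le> n"
    and col: "{x, y, z} \<subseteq> {1..s} \<union> {t+1..n} \<or> {x, y, z} \<subseteq> {s+1..t}"
    using p unfolding xyz mono_triples4_def by auto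
  have "y \<le> t" using z zn assms x1 by linarith
  show "p \<in> block_triples n s t"
  proof (cases "y \<le> s")
    case True
    then have red: "{x, y, z} \<subseteq> {1..s} \<union> {t+1..n}" using col y1 by auto
    show ?thesis
    proof (cases "x \<le> s")
      case True
      \<comment> \<open>z \<le> 5s \<le> t rules out z > t\<close>
      then have "z \<le> s" using red z \<open>y \<le> s\<close> assms by auto
      then have "(x, y) \<in> pairs_le (int s)" using x1 y1 z unfolding pairs_le_def by auto
      moreover have "p = shift_triple 0 0 (x, y)" unfolding xyz shift_triple_def z by simp
      ultimately show ?thesis unfolding block_triples_def by blast
    next
      case False
      then have "t + 1 \<le> x" using red by auto
      then have "(x - t, y) \<in> {p \<in> pairs_le (int n - int t). snd p \<le> s}"
        using y1 z zn \<open>y \<le> s\<close> unfolding pairs_le_def by auto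
      moreover have "p = shift_triple t 0 (x - t, y)"
        unfolding xyz shift_triple_def z using \<open>t + 1 \<le> x\<close> by simp
      ultimately show ?thesis unfolding block_triples_def by blast
    qed
  next
    case False
    then have blue: "{x, y, z} \<subseteq> {s+1..t}" using col \<open>y \<le> t\<close> by auto
    then have "(x - s, y - s) \<in> pairs_le (int t - 5 * int s)"
      using False z unfolding pairs_le_def by auto
    moreover have "p = shift_triple s s (x - s, y - s)"
      unfolding xyz shift_triple_def z using blue False by auto
    ultimately show ?thesis unfolding block_triples_def by blast
  qed
qed

lemma block_count_le_schurM_4:
  assumes "s \<le> t" "t \<le> n"
  shows "block_count (int n) (int s) (int t) \<le> int (schurM 4 n s t)"
  using card_mono[OF finite_mono_triples4 block_triples_subset[OF assms]]
    card_block_triples[OF assms]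
  unfolding schurM_4_eq_card by linarith

lemma schurM_4_eq_block_count:
  assumes "s \<le> t" "t \<le> n" "5 * s \<le> t" "n \<le> 4 * t"
  shows "int (schurM 4 n s t) = block_count (int n) (int s) (int t)"
  using block_triples_subset[OF assms(1,2)] mono_triples4_subset_blocks[OF assms(1,3,4)]
    card_block_triples[OF assms(1,2)]
  unfolding schurM_4_eq_card by (metis subset_antisym)

lemma schurM_4_eq_0: "n \<le> 4 \<Longrightarrow> schurM 4 n s t = 0"
proof -
  assume "n \<le> 4"
  then have "mono_triples4 n s t = {}" unfolding mono_triples4_def by auto
  then show ?thesis unfolding schurM_4_eq_card by simp
qed

section \<open>The lower bound\<close>

definition schur4_bound :: "int \<Rightarrow> int" where
  "schur4_bound n = (n\<^sup>2 - 28 * n + 245) div 216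
     - (if n mod 108 \<in> {0,1,27,28,43,47,48,53,58,63,67,68,69,73,78,83,88,89,93} then 1 else 0)"

lemmas schur4_period_induct =
  int_periodic_induct[where p = 108, OF zero_less_numeral, consumes 1, case_names base step]

lemma schur4_bound_period: "schur4_bound (n + 108) = schur4_bound n + n + 40"
proof -
  have "(n + 108)\<^sup>2 - 28 * (n + 108) + 245 = (n\<^sup>2 - 28 * n + 245) + (n + 40) * 216"
    by (simp add: algebra_simps power2_eq_square)
  then show ?thesis unfolding schur4_bound_def by simp
qed

lemma schur4_bound_upper: "216 * schur4_bound n \<le> n\<^sup>2 - 28 * n + 245"
proof -
  have "216 * ((n\<^sup>2 - 28 * n + 245) div 216) \<le> n\<^sup>2 - 28 * n + 245"
    using div_mult_mod_eq[of "n\<^sup>2 - 28 * n + 245" 216] pos_mod_sign[of 216 "n\<^sup>2 - 28 * n + 245"]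
    by linarith
  then show ?thesis unfolding schur4_bound_def by auto
qed

lemma schur4_bound_mono_base: "list_all (\<lambda>n. schur4_bound n \<le> schur4_bound (n + 1)) [0..107]"
  by code_simp

lemma schur4_bound_mono:
  assumes "0 \<le> n" "n \<le> m"
  shows "schur4_bound n \<le> schur4_bound m"
  using assms(2)
proof (induction m rule: int_ge_induct)
  case (step m)
  have "0 \<le> m" using assms step.hyps by simp
  then have "schur4_bound m \<le> schur4_bound (m + 1)"
  proof (induction m rule: schur4_period_induct)
    case (base m)
    then show ?case using schur4_bound_mono_base by (simp add: list_all_iff)
  next
    case (step m)
    then show ?case using schur4_bound_period[of m] schur4_bound_period[of "m + 1"]
      by (simp add: algebra_simps)
  qed
  with step.IH show ?case by simp
qed simp

definition pair_count_sum_check :: "int \<Rightarrow> bool" where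
  "pair_count_sum_check n \<longleftrightarrow>
     list_all (\<lambda>s. list_all
       (\<lambda>u. schur4_bound n \<le> pair_count s + pair_count u + pair_count (n - 5 * s - u))
       [(n - 60) div 27..(n + 140) div 27]) [(5 * n - 116) div 27..(5 * n + 84) div 27]"

lemma pair_count_sum_check_base: "list_all pair_count_sum_check [0..107]"
  by code_simp

text \<open>The real minimum of s^2 + u^2 + w^2 - 4(s + u + w) on the plane 5s + u + w = n lies at
  s = (5n - 16)/27, u = w = (n + 40)/27; the three squares measure the distance from it.\<close>
lemma pair_count_sum_quadratic_lower:
  fixes n s u :: int
  shows "(27 * s - 5 * n + 16)\<^sup>2 + (27 * u - n - 40)\<^sup>2 + (27 * (n - 5 * s - u) - n - 40)\<^sup>2
      + 27 * (n\<^sup>2 - 28 * n - 128)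
    \<le> 5832 * (pair_count s + pair_count u + pair_count (n - 5 * s - u))"
proof -
  define w where "w = n - 5 * s - u"
  have "729 * ((s\<^sup>2 - 4 * s) + (u\<^sup>2 - 4 * u) + (w\<^sup>2 - 4 * w))
      = (27 * s - 5 * n + 16)\<^sup>2 + (27 * u - n - 40)\<^sup>2 + (27 * w - n - 40)\<^sup>2
        + 27 * (n\<^sup>2 - 28 * n - 128)"
    unfolding w_def by (simp add: algebra_simps power2_eq_square)
  moreover have "729 * ((s\<^sup>2 - 4 * s) + (u\<^sup>2 - 4 * u) + (w\<^sup>2 - 4 * w))
      \<le> 729 * (8 * pair_count s + 8 * pair_count u + 8 * pair_count w)"
    using pair_count_lower[of s] pair_count_lower[of u] pair_count_lower[of w]
    by (intro mult_left_mono add_mono) auto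
  ultimately show ?thesis unfolding w_def[symmetric] by simp
qed

lemma schur4_bound_le_pair_count_sum_base:
  assumes "0 \<le> n" "n < 108"
  shows "schur4_bound n \<le> pair_count s + pair_count u + pair_count (n - 5 * s - u)"
proof -
  define A B C where "A = 27 * s - 5 * n + 16" and "B = 27 * u - n - 40"
    and "C = 27 * (n - 5 * s - u) - n - 40"
  have quadratic: "A\<^sup>2 + B\<^sup>2 + C\<^sup>2 + 27 * (n\<^sup>2 - 28 * n - 128)
      \<le> 5832 * (pair_count s + pair_count u + pair_count (n - 5 * s - u))"
    unfolding A_def B_def C_def by (rule pair_count_sum_quadratic_lower)
  show ?thesis
  proof (cases "\<bar>A\<bar> \<le> 100 \<and> \<bar>B\<bar> \<le> 100")
    case True
    then have "(5 * n - 116) div 27 \<le> (27 * s) div 27" "(27 * s) div 27 \<le> (5 * n + 84) div 27"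
      "(n - 60) div 27 \<le> (27 * u) div 27" "(27 * u) div 27 \<le> (n + 140) div 27"
      unfolding A_def B_def by (intro zdiv_mono1; linarith)+
    moreover have "pair_count_sum_check n"
      using pair_count_sum_check_base assms by (simp add: list_all_iff)
    ultimately show ?thesis unfolding pair_count_sum_check_def by (auto simp: list_all_iff)
  next
    case False
    have square_ge: "10201 \<le> x\<^sup>2" if "101 \<le> \<bar>x\<bar>" for x :: int
    proof -
      have "101 * 101 \<le> \<bar>x\<bar> * \<bar>x\<bar>" using that by (intro mult_mono) auto
      then show ?thesis by (simp add: power2_eq_square)
    qed
    have "10201 \<le> A\<^sup>2 \<or> 10201 \<le> B\<^sup>2" using False square_ge[of A] square_ge[of B] by auto
    then have "10201 \<le> A\<^sup>2 + B\<^sup>2 + C\<^sup>2"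
      using zero_le_power2[of A] zero_le_power2[of B] zero_le_power2[of C] by linarith
    have "5832 * schur4_bound n \<le> 27 * (n\<^sup>2 - 28 * n + 245)"
      using schur4_bound_upper[of n] by simp
    also have "\<dots> \<le> A\<^sup>2 + B\<^sup>2 + C\<^sup>2 + 27 * (n\<^sup>2 - 28 * n - 128)"
      using \<open>10201 \<le> A\<^sup>2 + B\<^sup>2 + C\<^sup>2\<close> by (simp add: algebra_simps)
    also note quadratic
    finally show ?thesis by simp
  qed
qed

lemma schur4_bound_le_pair_count_sum:
  assumes "0 \<le> n"
  shows "schur4_bound n \<le> pair_count s + pair_count u + pair_count (n - 5 * s - u)"
  using assms
proof (induction n arbitrary: s u rule: schur4_period_induct)
  case (base n)
  then show ?case by (rule schur4_bound_le_pair_count_sum_base)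
next
  case (step n s u)
  define w where "w = n + 108 - 5 * s - u"
  have shift: "n - 5 * (s - 20) - (u - 4) = w - 4" unfolding w_def by simp
  have "schur4_bound n \<le> pair_count (s - 20) + pair_count (u - 4) + pair_count (w - 4)"
    using step.IH[of "s - 20" "u - 4"] unfolding shift .
  moreover have "pair_count s + pair_count u + pair_count w
      = pair_count (s - 20) + pair_count (u - 4) + pair_count (w - 4) + n + 40"
    using pair_count_period[of "s - 20" "u - 4" "w - 4"] shift by simp
  ultimately have "schur4_bound (n + 108) \<le> pair_count s + pair_count u + pair_count w"
    using schur4_bound_period[of n] by linarith
  then show ?case unfolding w_def .
qed

lemma concave_quadratic_nonneg_between:
  fixes c b a lo hi x :: "'a::linordered_idom"
  assumes q: "\<And>x. q x = c * x\<^sup>2 + b * x + a"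
    and "c \<le> 0" "lo \<le> x" "x \<le> hi" "0 \<le> q lo" "0 \<le> q hi"
  shows "0 \<le> q x"
proof (cases "lo = hi")
  case True
  then show ?thesis using assms by simp
next
  case False
  have "(hi - lo) * q x
      = (x - lo) * q hi + (hi - x) * q lo + (hi - lo) * ((- c) * ((x - lo) * (hi - x)))"
    unfolding q by (simp add: algebra_simps power2_eq_square)
  also have "0 \<le> \<dots>"
    using assms by (intro add_nonneg_nonneg mult_nonneg_nonneg) auto
  finally show ?thesis using False assms(3,4) by (simp add: zero_le_mult_iff)
qed

lemma short_tail_quadratic_le:
  fixes s a u :: int
  assumes "1 \<le> s" "0 \<le> a" "4 * s + 5 \<le> u" "u \<le> 4 * a + 20 * s"
  shows "(a + 5 * s + u)\<^sup>2 - 28 * (a + 5 * s + u) + 245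
    \<le> 27 * (s\<^sup>2 - 4 * s) + 216 * (s * (u - 2 * s - 2)) + 27 * (a\<^sup>2 - 4 * a)"
proof -
  define q where "q u = 27 * (s\<^sup>2 - 4 * s) + 216 * (s * (u - 2 * s - 2)) + 27 * (a\<^sup>2 - 4 * a)
    - ((a + 5 * s + u)\<^sup>2 - 28 * (a + 5 * s + u) + 245)" for u
  have poly: "q u = (- 1) * u\<^sup>2 + (206 * s - 2 * a + 28) * u
      + (26 * a\<^sup>2 - 10 * a * s - 430 * s\<^sup>2 - 80 * a - 400 * s - 245)" for u
    unfolding q_def by (simp add: algebra_simps power2_eq_square)
  have low: "0 \<le> q (4 * s + 5)"
  proof -
    have "q (4 * s + 5) = 378 * s\<^sup>2 - 18 * a * s + 26 * a\<^sup>2 + 702 * s - 90 * a - 130"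
      unfolding q_def by (simp add: algebra_simps power2_eq_square)
    moreover have "24 * (6 * a\<^sup>2 - 18 * a * s + 378 * s\<^sup>2) = (12 * a - 18 * s)\<^sup>2 + 8748 * s\<^sup>2"
      "80 * (20 * a\<^sup>2 - 90 * a + 102) = (40 * a - 90)\<^sup>2 + 60"
      by (simp_all add: algebra_simps power2_eq_square)
    moreover have "s \<le> s\<^sup>2" using assms(1) by (simp add: power2_eq_square)
    ultimately show ?thesis using assms by (smt (verit) zero_le_power2)
  qed
  have high: "0 \<le> q (4 * a + 20 * s)"
  proof -
    have "q (4 * a + 20 * s) = 3290 * s\<^sup>2 + 614 * (a * s) + 2 * a\<^sup>2 + 160 * s + 32 * a - 245"
      unfolding q_def by (simp add: algebra_simps power2_eq_square)
    moreover have "0 \<le> a * s" "0 \<le> a\<^sup>2" "1 \<le> s\<^sup>2" using assms by (simp_all add: one_le_power)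
    ultimately show ?thesis using assms by linarith
  qed
  have "0 \<le> q u"
    by (rule concave_quadratic_nonneg_between[OF poly _ _ _ low high]) (use assms in auto)
  then show ?thesis unfolding q_def by simp
qed

lemma pair_count_le_long_tail:
  assumes "1 \<le> s" "s \<le> t" "4 * t \<le> u"
  shows "pair_count t \<le> pair_count s + s * (u - 2 * s - 2) + pair_count (max 0 (t - 5 * s))"
proof -
  have "0 \<le> pair_count s" "0 \<le> pair_count (max 0 (t - 5 * s))"
    using assms by (simp_all add: pair_count_nonneg)
  show ?thesis
  proof (cases "t \<le> 2")
    case True
    then have "pair_count t = 0" using assms by (intro pair_count_eq_0) auto
    moreover have "0 \<le> s * (u - 2 * s - 2)" using assms by simp
    ultimately show ?thesis
      using \<open>0 \<le> pair_count s\<close> \<open>0 \<le> pair_count (max 0 (t - 5 * s))\<close> by linarith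
  next
    case False
    have "4 * pair_count t \<le> 5 * s * t + 4 * pair_count (max 0 (t - 5 * s))"
    proof (cases "5 * s \<le> t")
      case True
      have "4 * (pair_count t - pair_count (t - 5 * s)) \<le> (t - (t - 5 * s)) * t"
        by (rule pair_count_diff_le) (use assms in simp)
      then show ?thesis using True by (simp add: algebra_simps)
    next
      case False
      have "t * t \<le> 5 * (s * t)" using False assms by (simp add: mult_right_mono)
      moreover have "0 \<le> s * t" "8 * pair_count t \<le> t * t - 4 * t + 4"
        using assms pair_count_upper[of t] by (simp_all add: power2_eq_square)
      ultimately show ?thesis using \<open>0 \<le> pair_count (max 0 (t - 5 * s))\<close> assms by linarith
    qed
    moreover have "5 * s * t \<le> 4 * (s * (u - 2 * s - 2))"
    proof -
      have "s * (11 * t - 8 * s - 8) \<le> s * (4 * u - 5 * t - 8 * s - 8)"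
        using assms by (intro mult_left_mono) auto
      moreover have "0 \<le> s * (11 * t - 8 * s - 8)" using assms False by simp
      ultimately show ?thesis by (simp add: algebra_simps)
    qed
    ultimately show ?thesis using \<open>0 \<le> pair_count s\<close> by linarith
  qed
qed

lemma schur4_bound_le_short_tail:
  assumes "1 \<le> s" "0 \<le> a" "0 \<le> u" "u \<le> 4 * a + 20 * s"
  shows "schur4_bound (a + 5 * s + u)
    \<le> pair_count s + (pair_count u - pair_count (max 0 (u - 4 * s))) + pair_count a"
proof (cases "u \<le> 4 * s + 4")
  case True
  then have "pair_count (max 0 (u - 4 * s)) = 0" by (intro pair_count_eq_0) auto
  then show ?thesis using schur4_bound_le_pair_count_sum[of "a + 5 * s + u" s u] assms by simp
next
  case False
  have "216 * schur4_bound (a + 5 * s + u)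
      \<le> 27 * (s\<^sup>2 - 4 * s) + 216 * (s * (u - 2 * s - 2)) + 27 * (a\<^sup>2 - 4 * a)"
    using schur4_bound_upper[of "a + 5 * s + u"] short_tail_quadratic_le[of s a u] assms False
    by simp
  also have "\<dots> \<le> 27 * (8 * pair_count s) + 216 * (s * (u - 2 * s - 2)) + 27 * (8 * pair_count a)"
    using pair_count_lower[of s] pair_count_lower[of a] by simp
  finally have "schur4_bound (a + 5 * s + u) \<le> pair_count s + s * (u - 2 * s - 2) + pair_count a"
    by simp
  moreover have "pair_count u - pair_count (max 0 (u - 4 * s)) = s * (u - 2 * s - 2)"
    using pair_count_diff[of u s] False assms(1) by simp
  ultimately show ?thesis by simp
qed

lemma schur4_bound_le_block_count:
  fixes n s t :: int
  assumes "1 \<le> s" "s \<le> t" "t \<le> n"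
  shows "schur4_bound n \<le> block_count n s t"
proof (cases "5 * t \<le> n")
  case True
  have "pair_count (n - t) - pair_count (max 0 (n - t - 4 * s)) = s * (n - t - 2 * s - 2)"
    using pair_count_diff[of "n - t" s] True assms by simp
  then have "block_count n s t
      = pair_count s + s * (n - t - 2 * s - 2) + pair_count (max 0 (t - 5 * s))
        + pair_count (n - 5 * t)"
    unfolding block_count_def using True by simp
  moreover have "schur4_bound n \<le> pair_count t + pair_count (n - 5 * t)"
    using schur4_bound_le_pair_count_sum[of n t 0] assms by (simp add: pair_count_def)
  moreover have "pair_count t
      \<le> pair_count s + s * (n - t - 2 * s - 2) + pair_count (max 0 (t - 5 * s))"
    using True assms by (intro pair_count_le_long_tail) auto
  ultimately show ?thesis by linarith
next
  case False
  \<comment> \<open>Now the count depends on t only through u = n - t and max 0 (t - 5s), while the bound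
    is monotone in n; so t may be raised to 5s if it is smaller.\<close>
  define a u where "a = max 0 (t - 5 * s)" and "u = n - t"
  have a: "t - 5 * s \<le> a" "0 \<le> a" unfolding a_def by simp_all
  have "block_count n s t
      = pair_count s + (pair_count u - pair_count (max 0 (u - 4 * s))) + pair_count a"
    unfolding block_count_def a_def u_def using False by (simp add: pair_count_def)
  moreover have "schur4_bound n \<le> schur4_bound (a + 5 * s + u)"
    using assms unfolding a_def u_def by (intro schur4_bound_mono) auto
  moreover have "schur4_bound (a + 5 * s + u)
      \<le> pair_count s + (pair_count u - pair_count (max 0 (u - 4 * s))) + pair_count a"
    using a assms False unfolding u_def by (intro schur4_bound_le_short_tail) auto
  ultimately show ?thesis by linarith
qed

section \<open>Optimal colourings\<close>

definition optimal_split :: "int \<Rightarrow> int \<Rightarrow> int \<Rightarrow> bool" where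
  "optimal_split n s t \<longleftrightarrow> 1 \<le> s \<and> 5 * s \<le> t \<and> t \<le> n \<and> n \<le> 4 * t \<and> n - t \<le> 4 * s + 4
     \<and> pair_count s + pair_count (n - t) + pair_count (t - 5 * s) = schur4_bound n"

lemma optimal_split_base:
  "list_all (\<lambda>n. list_ex (\<lambda>s. optimal_split n s (max 5 (n - 4)))
     [(5 * n - 16) div 27..(5 * n - 16) div 27 + 1]) [5..112]"
  by code_simp

lemma optimal_split_exists:
  assumes "0 \<le> m"
  shows "\<exists>s t. optimal_split (m + 5) s t"
  using assms
proof (induction m rule: schur4_period_induct)
  case (base m)
  then have "m + 5 \<in> set [5..112]" unfolding set_upto by simp
  with optimal_split_base show ?case unfolding list_all_iff list_ex_iff by blast
next
  case (step m)
  define n where "n = m + 5"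
  obtain s t where st: "optimal_split n s t" using step.IH unfolding n_def by blast
  have "pair_count (s + 20) + pair_count (n - t + 4) + pair_count (t - 5 * s + 4)
      = pair_count s + pair_count (n - t) + pair_count (t - 5 * s) + n + 40"
    using pair_count_period[of s "n - t" "t - 5 * s"] by simp
  moreover have shift: "n + 108 - (t + 104) = n - t + 4" "t + 104 - 5 * (s + 20) = t - 5 * s + 4"
    by simp_all
  ultimately have "optimal_split (n + 108) (s + 20) (t + 104)"
    using st schur4_bound_period[of n] unfolding optimal_split_def shift by auto
  then show ?case unfolding n_def by (auto simp: algebra_simps)
qed

lemma block_count_optimal_split:
  assumes "optimal_split n s t"
  shows "block_count n s t = schur4_bound n"
proof -
  have "pair_count (max 0 (n - t - 4 * s)) = 0" "pair_count (max 0 (n - 5 * t)) = 0"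
    "max 0 (t - 5 * s) = t - 5 * s"
    using assms unfolding optimal_split_def by (auto intro!: pair_count_eq_0)
  then show ?thesis using assms unfolding optimal_split_def block_count_def by simp
qed

lemma schurM_4_attains_bound:
  assumes "1 \<le> n"
  shows "\<exists>s t. 1 \<le> s \<and> s \<le> t \<and> t \<le> n \<and> int (schurM 4 n s t) = schur4_bound (int n)"
proof (cases "n \<le> 4")
  case True
  then have "n \<in> {1, 2, 3, 4}" using assms by auto
  then have "schur4_bound (int n) = 0" unfolding schur4_bound_def by auto
  then show ?thesis using schurM_4_eq_0[OF True] assms by auto
next
  case False
  then obtain s t where st: "optimal_split (int n) s t"
    using optimal_split_exists[of "int n - 5"] by auto
  then have "1 \<le> nat s" "nat s \<le> nat t" "nat t \<le> n" "5 * nat s \<le> nat t" "n \<le> 4 * nat t"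
    unfolding optimal_split_def by linarith+
  moreover have "int (nat s) = s" "int (nat t) = t" using st unfolding optimal_split_def by simp_all
  ultimately have "int (schurM 4 n (nat s) (nat t)) = schur4_bound (int n)"
    using schurM_4_eq_block_count block_count_optimal_split[OF st] by metis
  then show ?thesis using \<open>1 \<le> nat s\<close> \<open>nat s \<le> nat t\<close> \<open>nat t \<le> n\<close> by blast
qed

lemma schur4_bound_le_schurM_4:
  assumes "1 \<le> s" "s \<le> t" "t \<le> n"
  shows "schur4_bound (int n) \<le> int (schurM 4 n s t)"
  using schur4_bound_le_block_count[of "int s" "int t" "int n"] block_count_le_schurM_4[of s t n]
    assms
  by simp

lemma schur4_bound_eq_floor:
  "schur4_bound (int n) = \<lfloor>(real n ^ 2 - 28 * real n + 245) / 216\<rfloor>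
     - (if n mod 108 \<in> {0,1,27,28,43,47,48,53,58,63,67,68,69,73,78,83,88,89,93} then 1 else 0)"
proof -
  have "(real n ^ 2 - 28 * real n + 245) / 216
      = real_of_int (int n ^ 2 - 28 * int n + 245) / real_of_int 216"
    by simp
  then have "\<lfloor>(real n ^ 2 - 28 * real n + 245) / 216\<rfloor> = (int n ^ 2 - 28 * int n + 245) div 216"
    by (simp only: floor_divide_of_int_eq)
  moreover have "int n mod 108 = int (n mod 108)" by (simp add: zmod_int)
  moreover have "(n mod 108 \<in> {0,1,27,28,43,47,48,53,58,63,67,68,69,73,78,83,88,89,93}) =
      (int (n mod 108) \<in> {0,1,27,28,43,47,48,53,58,63,67,68,69,73,78,83,88,89,93})" by auto
  ultimately show ?thesis unfolding schur4_bound_def by simp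
qed

theorem theorem4p4:
  fixes n :: nat
  assumes "n \<ge> 1"
  shows "int (schurMmin 4 n) =
           \<lfloor>(real n ^ 2 - 28 * real n + 245) / 216\<rfloor>
           - (if n mod 108 \<in> {0,1,27,28,43,47,48,53,58,63,67,68,69,73,78,83,88,89,93} then 1 else 0)"
proof -
  let ?values = "{schurM 4 n s t | s t. 1 \<le> s \<and> s \<le> t \<and> t \<le> n}"
  obtain s t where st: "1 \<le> s" "s \<le> t" "t \<le> n" "int (schurM 4 n s t) = schur4_bound (int n)"
    using schurM_4_attains_bound[OF assms] by blast
  have "?values \<subseteq> (\<lambda>(s, t). schurM 4 n s t) ` ({1..n} \<times> {1..n})" by force
  then have "finite ?values" by (rule finite_subset) simp
  then have "schurMmin 4 n = schurM 4 n s t"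
    unfolding schurMmin_def
  proof (rule Min_eqI)
    show "schurM 4 n s t \<le> v" if "v \<in> ?values" for v
      using that schur4_bound_le_schurM_4 st(4) by fastforce
  qed (use st in blast)
  then show ?thesis using st(4) schur4_bound_eq_floor[of n] by simp
qed

end
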